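(* For each $r\in\{0,1,2,3,4,5\}$, the recession cone $C^r=\{x\in\mathbb R^6:\ \sigma\tilde c\cdot x\ge 0 \text{ for all } \tilde c\in\mathcal C_r,\ \sigma\in\mathfrak S_3\}$ of the polyhedron $Q^r$ is the cone generated by the five rays $[1,0,1,0,0,0]$, $[1,0,0,1,1,0]$, $[0,1,1,0,0,1]$, $[0,1,0,0,1,0]$, $[0,0,0,1,0,1]$ (which are the transition-count vectors of the loops $121$, $1231$, $1321$, $131$, $232$ respectively); in particular $C^0=C^1=\dots=C^5$.
   Context: Vectors of $\mathbb R^6$ are indexed by ordered pairs $ij$ of distinct elements of $\{1,2,3\}$ in the order $[x_{12},x_{13},x_{21},x_{23},x_{31},x_{32}]$; $\mathfrak S_3$ acts by $(\sigma c)_{ij}=c_{\sigma(i)\sigma(j)}$. Consider the following pairs $(\tilde c,a)$: $A_1=([1,0,0,0,0,0],0)$, $A_2=([1,1,-1,0,-1,0],-1)$, $B_{\mathrm{odd}}=([1,1,-1,-1,1,1],0)$, $B_{\mathrm{even}}=([3,1,-1,-1,-1,1],-1)$, $D_1=([2,-1,-1,-1,2,2],0)$, $D_2=([2,-1,-1,-1,2,2],-1)$, $D_3=([5,2,-4,-1,-1,2],-2)$, $D_0=([5,2,-4,-1,-1,2],-2)$. For $T=6k+r$ with $r\in\{0,\dots,5\}$, the applicable pairs are $A_1,A_2$; $B_{\mathrm{odd}}$ if $T$ is odd and $B_{\mathrm{even}}$ if $T$ is even; and $D_1$ if $T\equiv1 \pmod 3$, $D_2$ if $T\equiv 2\pmod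 3$, $D_3$ if $T\equiv 3\pmod 6$, $D_0$ if $T\equiv 0\pmod 6$ (this depends only on $r$). Let $\mathcal C_r$ be the set of the four vectors $\tilde c$ of the applicable pairs, and let $Q^r=\{x\in\mathbb R^6: \sigma\tilde c\cdot x\ge a \text{ for every applicable pair }(\tilde c,a)\text{ and every }\sigma\in\mathfrak S_3\}$. Writing $Q^r$ as a Minkowski sum $Q^r=P^r+C^r$ of a polytope and a cone, $C^r$ is the recession cone of $Q^r$, which equals the set displayed in the claim. *)

theory Defs
  imports "HOL-Analysis.Analysis"
begin

text \<open>Index set of R^6: ordered pairs ij of distinct elements of {1,2,3},
  in the order 12, 13, 21, 23, 31, 32.\<close>
datatype idx = I12 | I13 | I21 | I23 | I31 | I32

lemma UNIV_idx: "(UNIV :: idx set) = {I12, I13, I21, I23, I31, I32}"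
  using idx.exhaust by auto

instance idx :: finite
  by standard (simp add: UNIV_idx)

fun src :: "idx \<Rightarrow> nat" where
  "src I12 = 1" | "src I13 = 1" | "src I21 = 2" | "src I23 = 2" | "src I31 = 3" | "src I32 = 3"

fun tgt :: "idx \<Rightarrow> nat" where
  "tgt I12 = 2" | "tgt I13 = 3" | "tgt I21 = 1" | "tgt I23 = 3" | "tgt I31 = 1" | "tgt I32 = 2"

text \<open>The coordinate ij (only meaningful for distinct i, j in {1,2,3}).\<close>
definition pos :: "nat \<Rightarrow> nat \<Rightarrow> idx" where
  "pos i j = (THE k. src k = i \<and> tgt k = j)"

type_synonym vec6 = "real ^ idx"

definition mk6 :: "real \<Rightarrow> real \<Rightarrow> real \<Rightarrow> real \<Rightarrow> real \<Rightarrow> real \<Rightarrow> vec6" where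
  "mk6 a b c d e f = (\<chi> k. case k of I12 \<Rightarrow> a | I13 \<Rightarrow> b | I21 \<Rightarrow> c | I23 \<Rightarrow> d | I31 \<Rightarrow> e | I32 \<Rightarrow> f)"

definition act :: "(nat \<Rightarrow> nat) \<Rightarrow> vec6 \<Rightarrow> vec6" where
  "act \<sigma> c = (\<chi> k. c $ pos (\<sigma> (src k)) (\<sigma> (tgt k)))"

definition pA1 :: "vec6 \<times> real" where "pA1 = (mk6 1 0 0 0 0 0, 0)"
definition pA2 :: "vec6 \<times> real" where "pA2 = (mk6 1 1 (-1) 0 (-1) 0, -1)"
definition pBodd :: "vec6 \<times> real" where "pBodd = (mk6 1 1 (-1) (-1) 1 1, 0)"
definition pBeven :: "vec6 \<times> real" where "pBeven = (mk6 3 1 (-1) (-1) (-1) 1, -1)"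
definition pD1 :: "vec6 \<times> real" where "pD1 = (mk6 2 (-1) (-1) (-1) 2 2, 0)"
definition pD2 :: "vec6 \<times> real" where "pD2 = (mk6 2 (-1) (-1) (-1) 2 2, -1)"
definition pD3 :: "vec6 \<times> real" where "pD3 = (mk6 5 2 (-4) (-1) (-1) 2, -2)"
definition pD0 :: "vec6 \<times> real" where "pD0 = (mk6 5 2 (-4) (-1) (-1) 2, -2)"

text \<open>Applicable pairs for T = 6k + r (depends only on r).\<close>
definition applicable :: "nat \<Rightarrow> (vec6 \<times> real) set" where
  "applicable r = {pA1, pA2, if odd r then pBodd else pBeven,
     if r mod 3 = 1 then pD1 else if r mod 3 = 2 then pD2
     else if r mod 6 = 3 then pD3 else pD0}"

definition Cset :: "nat \<Rightarrow> vec6 set" where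
  "Cset r = fst ` applicable r"

text \<open>The polyhedron Q^r (not needed for the claim, recorded for context).\<close>
definition Qpoly :: "nat \<Rightarrow> vec6 set" where
  "Qpoly r = {x. \<forall>(c, a) \<in> applicable r. \<forall>\<sigma>. \<sigma> permutes {1,2,3} \<longrightarrow> act \<sigma> c \<bullet> x \<ge> a}"

definition Ccone :: "nat \<Rightarrow> vec6 set" where
  "Ccone r = {x. \<forall>c \<in> Cset r. \<forall>\<sigma>. \<sigma> permutes {1,2,3} \<longrightarrow> act \<sigma> c \<bullet> x \<ge> 0}"

end

theory Submission
  imports Defs
begin

text \<open>
  Read x \<in> R^6 as a flow on the complete digraph on {1,2,3}, x_ij being the flow on the arc
  i \<rightarrow> j. The translates of A1 say x \<ge> 0 and those of A2 that no vertex receives more than it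
  emits; since total inflow equals total outflow, x is a circulation. A nonnegative circulation
  decomposes into the five simple cycles of the digraph: remove the 2-cycles as far as possible,
  and what remains is a single 3-cycle, oriented by the sign of x_12 - x_21. Conversely every
  permuted constraint vector (B and D included) is nonnegative on the five cycles, so each C^r is
  the cone of nonnegative circulations.
\<close>

\<comment> \<open>Keeps the vertex 1 a numeral, so that it matches the rewrite rules below.\<close>
declare One_nat_def [simp del]

lemma pos_src_tgt [simp]: "pos (src k) (tgt k) = k"
  unfolding pos_def
proof (rule the_equality)
  show "\<And>k'. src k' = src k \<and> tgt k' = tgt k \<Longrightarrow> k' = k"
    by (cases k; case_tac k'; simp)
qed simp

lemma pos_simps [simp]:
  "pos 1 2 = I12" "pos 1 3 = I13" "pos 2 1 = I21" "pos 2 3 = I23" "pos 3 1 = I31" "pos 3 2 = I32"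
  using pos_src_tgt[of I12] pos_src_tgt[of I13] pos_src_tgt[of I21] pos_src_tgt[of I23]
    pos_src_tgt[of I31] pos_src_tgt[of I32] by simp_all

lemma mk6_nth [simp]:
  "mk6 a b c d e f $ I12 = a" "mk6 a b c d e f $ I13 = b" "mk6 a b c d e f $ I21 = c"
  "mk6 a b c d e f $ I23 = d" "mk6 a b c d e f $ I31 = e" "mk6 a b c d e f $ I32 = f"
  by (simp_all add: mk6_def)

lemma inner_vec6:
  "(x::vec6) \<bullet> y = x$I12*y$I12 + x$I13*y$I13 + x$I21*y$I21 + x$I23*y$I23 + x$I31*y$I31 + x$I32*y$I32"
  by (simp add: inner_vec_def UNIV_idx)

lemma inner_mk6:
  "mk6 a b c d e f \<bullet> mk6 a' b' c' d' e' f' = a*a' + b*b' + c*c' + d*d' + e*e' + f*f'"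
  by (simp add: inner_vec6)

lemma act_eq_mk6:
  "act \<sigma> c = mk6 (c $ pos (\<sigma> 1) (\<sigma> 2)) (c $ pos (\<sigma> 1) (\<sigma> 3)) (c $ pos (\<sigma> 2) (\<sigma> 1))
                   (c $ pos (\<sigma> 2) (\<sigma> 3)) (c $ pos (\<sigma> 3) (\<sigma> 1)) (c $ pos (\<sigma> 3) (\<sigma> 2))"
  unfolding vec_eq_iff act_def by (rule allI, case_tac i) simp_all

definition arrangements123 :: "(nat \<times> nat \<times> nat) set" where
  "arrangements123 = {(1,2,3), (1,3,2), (2,1,3), (2,3,1), (3,1,2), (3,2,1)}"

definition perm3 :: "nat \<Rightarrow> nat \<Rightarrow> nat \<Rightarrow> nat \<Rightarrow> nat" where
  "perm3 a b c = (\<lambda>n. if n = 1 then a else if n = 2 then b else if n = 3 then c else n)"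

lemma perm3_simps [simp]: "perm3 a b c 1 = a" "perm3 a b c 2 = b" "perm3 a b c 3 = c"
  by (simp_all add: perm3_def)

lemma perm3_permutes:
  assumes "(a, b, c) \<in> arrangements123"
  shows "perm3 a b c permutes {1,2,3}"
  using assms by (intro bij_imp_permutes) (auto simp: arrangements123_def perm3_def bij_betw_def inj_on_def)

lemma arrangements123_iff:
  "(a, b, c) \<in> arrangements123 \<longleftrightarrow>
     {a, b, c} \<subseteq> {1::nat, 2, 3} \<and> a \<noteq> b \<and> a \<noteq> c \<and> b \<noteq> c"
  unfolding arrangements123_def by auto

lemma permutes_123_arrangement:
  assumes "\<sigma> permutes {1::nat,2,3}"
  shows "(\<sigma> 1, \<sigma> 2, \<sigma> 3) \<in> arrangements123"
proof -
  have "{\<sigma> 1, \<sigma> 2, \<sigma> 3} = \<sigma> ` {1,2,3}" by simp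
  also have "\<dots> = {1,2,3}" using permutes_image[OF assms] .
  moreover have "\<sigma> 1 \<noteq> \<sigma> 2" "\<sigma> 1 \<noteq> \<sigma> 3" "\<sigma> 2 \<noteq> \<sigma> 3"
    using permutes_inj[OF assms] by (simp_all add: inj_eq)
  ultimately show ?thesis
    by (simp add: arrangements123_iff)
qed

definition outflow :: "vec6 \<Rightarrow> nat \<Rightarrow> real" where
  "outflow x i = (\<Sum>k \<in> {k. src k = i}. x $ k)"

definition inflow :: "vec6 \<Rightarrow> nat \<Rightarrow> real" where
  "inflow x i = (\<Sum>k \<in> {k. tgt k = i}. x $ k)"

definition circulations :: "vec6 set" where
  "circulations = {x. (\<forall>k. 0 \<le> x $ k) \<and> (\<forall>i \<in> {1,2,3}. outflow x i = inflow x i)}"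

lemma flow_simps:
  "outflow x 1 = x$I12 + x$I13" "outflow x 2 = x$I21 + x$I23" "outflow x 3 = x$I31 + x$I32"
  "inflow x 1 = x$I21 + x$I31" "inflow x 2 = x$I12 + x$I32" "inflow x 3 = x$I13 + x$I23"
proof -
  have "{k. src k = 1} = {I12, I13}" "{k. src k = 2} = {I21, I23}" "{k. src k = 3} = {I31, I32}"
       "{k. tgt k = 1} = {I21, I31}" "{k. tgt k = 2} = {I12, I32}" "{k. tgt k = 3} = {I13, I23}"
    by (rule set_eqI, case_tac x, simp_all)+
  then show "outflow x 1 = x$I12 + x$I13" "outflow x 2 = x$I21 + x$I23" "outflow x 3 = x$I31 + x$I32"
    "inflow x 1 = x$I21 + x$I31" "inflow x 2 = x$I12 + x$I32" "inflow x 3 = x$I13 + x$I23"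
    by (simp_all add: outflow_def inflow_def)
qed

lemma Ccone_subset_circulations: "Ccone r \<subseteq> circulations"
proof
  fix x assume x: "x \<in> Ccone r"
  have constraint: "0 \<le> act (perm3 a b c) v \<bullet> x" if "(a, b, c) \<in> arrangements123" "v \<in> Cset r" for a b c v
    using x perm3_permutes[OF that(1)] that(2) unfolding Ccone_def by blast
  have A1: "mk6 1 0 0 0 0 0 \<in> Cset r" and A2: "mk6 1 1 (-1) 0 (-1) 0 \<in> Cset r"
    unfolding Cset_def applicable_def pA1_def pA2_def by (simp_all add: image_iff)
  have "x$I12 \<ge> 0" "x$I13 \<ge> 0" "x$I21 \<ge> 0" "x$I23 \<ge> 0" "x$I31 \<ge> 0" "x$I32 \<ge> 0"
    using constraint[OF _ A1, of 1 2 3] constraint[OF _ A1, of 1 3 2] constraint[OF _ A1, of 2 1 3]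
      constraint[OF _ A1, of 3 1 2] constraint[OF _ A1, of 2 3 1] constraint[OF _ A1, of 3 2 1]
    by (simp_all add: arrangements123_def act_eq_mk6 inner_vec6)
  then have "\<forall>k. 0 \<le> x $ k"
    by (metis idx.exhaust)
  moreover have "inflow x 1 \<le> outflow x 1" "inflow x 2 \<le> outflow x 2" "inflow x 3 \<le> outflow x 3"
    using constraint[OF _ A2, of 1 2 3] constraint[OF _ A2, of 2 1 3] constraint[OF _ A2, of 3 2 1]
    by (simp_all add: arrangements123_def act_eq_mk6 inner_vec6 flow_simps)
  \<comment> \<open>The three slacks sum to zero, as every arc leaves one vertex and enters another.\<close>
  then have "\<forall>i \<in> {1,2,3}. outflow x i = inflow x i"
    by (auto simp: flow_simps)
  ultimately show "x \<in> circulations"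
    unfolding circulations_def by blast
qed

definition loops :: "vec6 set" where
  "loops = {mk6 1 0 1 0 0 0, mk6 1 0 0 1 1 0, mk6 0 1 1 0 0 1, mk6 0 1 0 0 1 0, mk6 0 0 0 1 0 1}"

lemma circulations_subset_loop_cone: "circulations \<subseteq> convex_cone hull loops"
proof
  fix x assume "x \<in> circulations"
  then have nonneg: "0 \<le> x$I12" "0 \<le> x$I13" "0 \<le> x$I21" "0 \<le> x$I23" "0 \<le> x$I31" "0 \<le> x$I32"
    and balance: "x$I12 + x$I13 = x$I21 + x$I31" "x$I21 + x$I23 = x$I12 + x$I32"
    by (auto simp: circulations_def flow_simps)
  \<comment> \<open>After removing the 2-cycles, the triangle carries the net flow x_12 - x_21 in one direction.\<close>
  define a where "a = max (x$I12 - x$I21) 0"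
  define b where "b = max (x$I21 - x$I12) 0"
  have decomposition: "x = (x$I12 - a) *\<^sub>R mk6 1 0 1 0 0 0 + a *\<^sub>R mk6 1 0 0 1 1 0
      + b *\<^sub>R mk6 0 1 1 0 0 1 + (x$I13 - b) *\<^sub>R mk6 0 1 0 0 1 0 + (x$I23 - a) *\<^sub>R mk6 0 0 0 1 0 1"
    unfolding vec_eq_iff
  proof
    fix k show "x $ k = ((x$I12 - a) *\<^sub>R mk6 1 0 1 0 0 0 + a *\<^sub>R mk6 1 0 0 1 1 0
      + b *\<^sub>R mk6 0 1 1 0 0 1 + (x$I13 - b) *\<^sub>R mk6 0 1 0 0 1 0 + (x$I23 - a) *\<^sub>R mk6 0 0 0 1 0 1) $ k"
      using balance by (cases k) (auto simp: a_def b_def)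
  qed
  have "x$I12 - a \<ge> 0" "a \<ge> 0" "b \<ge> 0" "x$I13 - b \<ge> 0" "x$I23 - a \<ge> 0"
    using nonneg balance by (auto simp: a_def b_def)
  then show "x \<in> convex_cone hull loops"
    by (subst decomposition)
      (intro convex_cone_hull_add convex_cone_scaleR convex_cone_convex_cone_hull hull_inc;
       simp add: loops_def)
qed

definition constraint_vectors :: "vec6 set" where
  "constraint_vectors = {mk6 1 0 0 0 0 0, mk6 1 1 (-1) 0 (-1) 0, mk6 1 1 (-1) (-1) 1 1,
     mk6 3 1 (-1) (-1) (-1) 1, mk6 2 (-1) (-1) (-1) 2 2, mk6 5 2 (-4) (-1) (-1) 2}"

lemma Cset_subset_constraint_vectors: "Cset r \<subseteq> constraint_vectors"
  unfolding constraint_vectors_def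
  by (auto simp: Cset_def applicable_def pA1_def pA2_def pBodd_def pBeven_def pD1_def pD2_def
      pD3_def pD0_def)

lemma loops_subset_Ccone: "loops \<subseteq> Ccone r"
proof (clarsimp simp: Ccone_def)
  fix g c and \<sigma> :: "nat \<Rightarrow> nat"
  assume "g \<in> loops" "c \<in> Cset r" "\<sigma> permutes {1,2,3}"
  with Cset_subset_constraint_vectors permutes_123_arrangement
  have "g \<in> loops" "c \<in> constraint_vectors" "(\<sigma> 1, \<sigma> 2, \<sigma> 3) \<in> arrangements123"
    by blast+
  then show "0 \<le> act \<sigma> c \<bullet> g"
    unfolding loops_def constraint_vectors_def arrangements123_def by (auto simp: act_eq_mk6 inner_mk6)
qed

lemma convex_cone_Ccone: "convex_cone (Ccone r)"
  unfolding convex_cone_iff Ccone_def by (auto simp: inner_add_right)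

theorem proposition13:
  assumes "r < (6::nat)"
  shows "Ccone r = convex_cone hull {mk6 1 0 1 0 0 0, mk6 1 0 0 1 1 0, mk6 0 1 1 0 0 1,
                              mk6 0 1 0 0 1 0, mk6 0 0 0 1 0 1}"
proof -
  have "Ccone r = convex_cone hull loops"
  proof
    show "Ccone r \<subseteq> convex_cone hull loops"
      using Ccone_subset_circulations circulations_subset_loop_cone by blast
    show "convex_cone hull loops \<subseteq> Ccone r"
      by (intro hull_minimal loops_subset_Ccone convex_cone_Ccone)
  qed
  then show ?thesis
    by (simp add: loops_def)
qed

end
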